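(* Let $\omega\colon\mathbf Z_+\to(0,+\infty)$ be a weight which is bounded from below, such that $\mathcal T$ is bounded on $\mathcal X_\omega$, and such that there exists $\rho>1$ for which the sequence $(\rho^n/\omega(k2^n))_{n\ge0}$ is bounded for every $k\ge3$. Then $\mathcal T$ satisfies the Godefroy–Shapiro Criterion on $\mathcal X_\omega$, i.e. both subspaces $\mathrm{span}[\ker(\mathcal T-\mu);\ |\mu|<1]$ and $\mathrm{span}[\ker(\mathcal T-\mu);\ |\mu|>1]$ are dense in $\mathcal X_\omega$. In particular this holds for $\omega=\omega_0$, $\omega_0(n)=(n+1)/\pi$ (with $\rho=2$).
   Context: $T\colon\mathbf Z_+\to\mathbf Z_+$ is the modified Collatz map: $T(n)=n/2$ for $n$ even, $T(n)=(3n+1)/2$ for $n$ odd. $\mathcal X_\omega$ is the Hilbert space of holomorphic functions $f(z)=\sum_{n\ge3}c_nz^n$ on the unit disk with $\|f\|_\omega^2=\sum_{n\ge3}|c_n|^2/\omega(n)<\infty$. $\mathcal T\sum_{n\ge3}c_nz^n=\sum_{j\ge3,\,T(j)\ge3}c_jz^{T(j)}$. $\mathcal T$ is bounded on $\mathcal X_\omega$ iff the sequences $\omega(6m)/\omega(3m)$, $\omega(6m+2)/\omega(3m+1)$, $(\omega(6m+4)+\omega(2m+1))/\omega(3m+2)$ ($m\ge1$) are bounded; this holds for $\omega_0$. *)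

theory Defs
  imports "HOL-Analysis.Analysis"
begin

definition collatz :: "nat \<Rightarrow> nat" where
  "collatz n = (if even n then n div 2 else (3 * n + 1) div 2)"

text \<open>Elements of X_omega are represented by their Taylor coefficient sequences
  c (f(z) = sum c n z^n): c n = 0 for n < 3, the power series converges on the
  open unit disk (f holomorphic there), and the weighted l2 norm is finite.\<close>
definition Xw :: "(nat \<Rightarrow> real) \<Rightarrow> (nat \<Rightarrow> complex) set" where
  "Xw \<omega> = {c. (\<forall>n<3. c n = 0)
              \<and> (\<forall>z::complex. norm z < 1 \<longrightarrow> summable (\<lambda>n. c n * z ^ n))
              \<and> summable (\<lambda>n. (cmod (c n))\<^sup>2 / \<omega> n)}"

definition wnorm :: "(nat \<Rightarrow> real) \<Rightarrow> (nat \<Rightarrow> complex) \<Rightarrow> real" where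
  "wnorm \<omega> c = sqrt (\<Sum>n. (cmod (c n))\<^sup>2 / \<omega> n)"

text \<open>The operator T on coefficient sequences:
  T (sum_{n>=3} c_n z^n) = sum_{j>=3, collatz j >= 3} c_j z^(collatz j).\<close>
definition Top :: "(nat \<Rightarrow> complex) \<Rightarrow> (nat \<Rightarrow> complex)" where
  "Top c m = (if m < 3 then 0 else (\<Sum>j\<in>{j. 3 \<le> j \<and> collatz j = m}. c j))"

definition T_bounded :: "(nat \<Rightarrow> real) \<Rightarrow> bool" where
  "T_bounded \<omega> \<longleftrightarrow> (\<exists>C. \<forall>c\<in>Xw \<omega>. Top c \<in> Xw \<omega> \<and> wnorm \<omega> (Top c) \<le> C * wnorm \<omega> c)"

definition eigsp :: "(nat \<Rightarrow> real) \<Rightarrow> complex \<Rightarrow> (nat \<Rightarrow> complex) set" where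
  "eigsp \<omega> \<mu> = {c \<in> Xw \<omega>. Top c = (\<lambda>n. \<mu> * c n)}"

definition cspan :: "(nat \<Rightarrow> complex) set \<Rightarrow> (nat \<Rightarrow> complex) set" where
  "cspan S = {f. \<exists>N (a::nat \<Rightarrow> complex) v. (\<forall>i<N. v i \<in> S)
                   \<and> f = (\<lambda>n. \<Sum>i<N. a i * v i n)}"

definition dense_in_Xw :: "(nat \<Rightarrow> real) \<Rightarrow> (nat \<Rightarrow> complex) set \<Rightarrow> bool" where
  "dense_in_Xw \<omega> S \<longleftrightarrow>
     (\<forall>c\<in>Xw \<omega>. \<forall>\<epsilon>>0. \<exists>d\<in>S. wnorm \<omega> (\<lambda>n. c n - d n) < \<epsilon>)"

definition godefroy_shapiro :: "(nat \<Rightarrow> real) \<Rightarrow> bool" where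
  "godefroy_shapiro \<omega> \<longleftrightarrow>
     dense_in_Xw \<omega> (cspan (\<Union>\<mu>\<in>{\<mu>. cmod \<mu> < 1}. eigsp \<omega> \<mu>)) \<and>
     dense_in_Xw \<omega> (cspan (\<Union>\<mu>\<in>{\<mu>. cmod \<mu> > 1}. eigsp \<omega> \<mu>))"

definition omega0 :: "nat \<Rightarrow> real" where
  "omega0 n = (real n + 1) / pi"

end

theory Submission
  imports Defs
begin

(*
  T shifts every doubling chain k 2^i down by one step. For odd k >= 3 the
  bottoms k and 3k+1 of the chains through k and 3k+1 both land on
  T k = T (3k+1), so the difference of the geometric sequences mu^i placed
  along the two chains is an eigenvector of the operator for mu; the chain
  4 2^i, whose bottom T pushes below 3, carries a geometric eigenvector by
  itself. The growth hypothesis puts these vectors into X_omega whenever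
  |mu|^2 < rho. Averaging them over mu = r zeta^j, zeta a primitive N-th root
  of unity, keeps only the indices congruent to n modulo N, so
  e_(k 2^n) - e_((3k+1) 2^n) and e_(4 2^n) lie in the closed span of the
  eigenvectors of modulus r, up to an error of order (r^2/rho)^(N/2). Thus
  every e_x is linked to some e_y with y > x. Averaging M telescoping
  differences e_x - e_(x_m) along such links leaves 1/M times M distinct unit
  vectors, of norm at most (M delta)^(-1/2) because omega >= delta; hence
  every e_x, and so all of X_omega, lies in that closed span. The radii
  r = 1/2 and 1 < r < sqrt rho give the two halves of the criterion.
*)

section \<open>Weighted square-summable sequences\<close>

definition wl2 :: "(nat \<Rightarrow> real) \<Rightarrow> (nat \<Rightarrow> complex) set" where
  "wl2 \<omega> = {c. (\<forall>n<3. c n = 0) \<and> summable (\<lambda>n. (cmod (c n))\<^sup>2 / \<omega> n)}"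

definition wsqnorm :: "(nat \<Rightarrow> real) \<Rightarrow> (nat \<Rightarrow> complex) \<Rightarrow> real" where
  "wsqnorm \<omega> c = (\<Sum>n. (cmod (c n))\<^sup>2 / \<omega> n)"

lemma wnorm_eq_sqrt_wsqnorm: "wnorm \<omega> c = sqrt (wsqnorm \<omega> c)"
  by (simp add: wnorm_def wsqnorm_def)

lemma Xw_eq: "Xw \<omega> = {c \<in> wl2 \<omega>. \<forall>z. cmod z < 1 \<longrightarrow> summable (\<lambda>n. c n * z ^ n)}"
  by (auto simp: Xw_def wl2_def)

lemma Xw_subset_wl2: "Xw \<omega> \<subseteq> wl2 \<omega>"
  by (auto simp: Xw_eq)

lemma wl2_zero: "(\<lambda>n. 0) \<in> wl2 \<omega>"
  by (simp add: wl2_def)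

lemma indicator_in_wl2: "3 \<le> x \<Longrightarrow> (indicator {x} :: nat \<Rightarrow> complex) \<in> wl2 \<omega>"
  unfolding wl2_def by (auto simp: indicator_def intro!: summable_finite[of "{x}"])

lemma wnorm_less_if_wsqnorm_less: "wsqnorm \<omega> c < \<epsilon>\<^sup>2 \<Longrightarrow> 0 < \<epsilon> \<Longrightarrow> wnorm \<omega> c < \<epsilon>"
  using real_sqrt_less_mono[of "wsqnorm \<omega> c" "\<epsilon>\<^sup>2"] by (simp add: wnorm_eq_sqrt_wsqnorm)

lemma sq_norm_add_le: "(cmod (a + b))\<^sup>2 \<le> 2 * (cmod a)\<^sup>2 + 2 * (cmod b)\<^sup>2"
proof -
  have "(cmod (a + b))\<^sup>2 \<le> (cmod a + cmod b)\<^sup>2"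
    by (simp add: norm_triangle_ineq power_mono)
  also have "\<dots> \<le> 2 * (cmod a)\<^sup>2 + 2 * (cmod b)\<^sup>2"
    using sum_squares_bound[of "cmod a" "cmod b"] by (simp add: power2_sum)
  finally show ?thesis .
qed

definition wmod :: "(nat \<Rightarrow> real) \<Rightarrow> (nat \<Rightarrow> complex) \<Rightarrow> nat \<Rightarrow> real" where
  "wmod \<omega> c n = cmod (c n) / sqrt (\<omega> n)"

locale weight =
  fixes \<omega> :: "nat \<Rightarrow> real"
  assumes weight_pos: "\<And>n. 3 \<le> n \<Longrightarrow> 0 < \<omega> n"
begin

lemma wl2_term_nonneg: "c \<in> wl2 \<omega> \<Longrightarrow> 0 \<le> (cmod (c n))\<^sup>2 / \<omega> n"
  using weight_pos[of n] by (cases "n < 3") (auto simp: wl2_def)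

lemma wl2_summable: "c \<in> wl2 \<omega> \<Longrightarrow> summable (\<lambda>n. (cmod (c n))\<^sup>2 / \<omega> n)"
  by (simp add: wl2_def)

lemma wsqnorm_nonneg: "c \<in> wl2 \<omega> \<Longrightarrow> 0 \<le> wsqnorm \<omega> c"
  unfolding wsqnorm_def by (rule suminf_nonneg[OF wl2_summable wl2_term_nonneg])

lemma wnorm_nonneg: "c \<in> wl2 \<omega> \<Longrightarrow> 0 \<le> wnorm \<omega> c"
  by (simp add: wnorm_eq_sqrt_wsqnorm wsqnorm_nonneg)

lemma partial_sum_le_wsqnorm: "c \<in> wl2 \<omega> \<Longrightarrow> (\<Sum>n<K. (cmod (c n))\<^sup>2 / \<omega> n) \<le> wsqnorm \<omega> c"
  unfolding wsqnorm_def by (rule sum_le_suminf[OF wl2_summable]) (auto intro: wl2_term_nonneg)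

lemma wl2_add:
  assumes c: "c \<in> wl2 \<omega>" and d: "d \<in> wl2 \<omega>"
  shows "(\<lambda>n. c n + d n) \<in> wl2 \<omega>"
proof -
  have "norm ((cmod (c n + d n))\<^sup>2 / \<omega> n)
          \<le> 2 * ((cmod (c n))\<^sup>2 / \<omega> n) + 2 * ((cmod (d n))\<^sup>2 / \<omega> n)" for n
  proof (cases "n < 3")
    case True
    then show ?thesis using c d by (simp add: wl2_def)
  next
    case False
    then have "0 < \<omega> n" by (simp add: weight_pos)
    then show ?thesis
      using divide_right_mono[OF sq_norm_add_le[of "c n" "d n"], of "\<omega> n"]
      by (simp add: add_divide_distrib)
  qed
  moreover have "summable (\<lambda>n. 2 * ((cmod (c n))\<^sup>2 / \<omega> n) + 2 * ((cmod (d n))\<^sup>2 / \<omega> n))"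
    using c d by (intro summable_add summable_mult wl2_summable)
  ultimately have "summable (\<lambda>n. (cmod (c n + d n))\<^sup>2 / \<omega> n)"
    by (rule summable_comparison_test'[rotated])
  then show ?thesis
    using c d by (simp add: wl2_def)
qed

lemma wl2_scale: "c \<in> wl2 \<omega> \<Longrightarrow> (\<lambda>n. a * c n) \<in> wl2 \<omega>"
  using summable_mult[OF wl2_summable, of c "(cmod a)\<^sup>2"]
  by (simp add: wl2_def norm_mult power_mult_distrib)

lemma wl2_diff: "c \<in> wl2 \<omega> \<Longrightarrow> d \<in> wl2 \<omega> \<Longrightarrow> (\<lambda>n. c n - d n) \<in> wl2 \<omega>"
  using wl2_add[of c "\<lambda>n. (-1) * d n"] wl2_scale[of d "-1"] by simp

lemma wl2_sum: "(\<And>i. i \<in> A \<Longrightarrow> v i \<in> wl2 \<omega>) \<Longrightarrow> (\<lambda>n. \<Sum>i\<in>A. v i n) \<in> wl2 \<omega>"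
  by (induction A rule: infinite_finite_induct) (simp_all add: wl2_zero wl2_add)

lemma wnorm_scale: "c \<in> wl2 \<omega> \<Longrightarrow> wnorm \<omega> (\<lambda>n. a * c n) = cmod a * wnorm \<omega> c"
  using suminf_mult[OF wl2_summable, of c "(cmod a)\<^sup>2"]
  by (simp add: wnorm_def norm_mult power_mult_distrib real_sqrt_mult)

lemma wmod_sq: "c \<in> wl2 \<omega> \<Longrightarrow> (wmod \<omega> c n)\<^sup>2 = (cmod (c n))\<^sup>2 / \<omega> n"
  using weight_pos[of n] by (cases "n < 3") (auto simp: wl2_def wmod_def power_divide)

lemma wmod_nonneg: "c \<in> wl2 \<omega> \<Longrightarrow> 0 \<le> wmod \<omega> c n"
  using weight_pos[of n] by (cases "n < 3") (auto simp: wl2_def wmod_def)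

lemma wmod_add_le:
  assumes "c \<in> wl2 \<omega>" "d \<in> wl2 \<omega>"
  shows "wmod \<omega> (\<lambda>n. c n + d n) n \<le> wmod \<omega> c n + wmod \<omega> d n"
proof (cases "n < 3")
  case True
  then show ?thesis
    using assms by (simp add: wmod_def wl2_def)
next
  case False
  then show ?thesis
    unfolding wmod_def add_divide_distrib[symmetric] using weight_pos[of n]
    by (intro divide_right_mono norm_triangle_ineq) simp
qed

lemma sq_L2_set_wmod: "c \<in> wl2 \<omega> \<Longrightarrow> (L2_set (wmod \<omega> c) {..<K})\<^sup>2 = (\<Sum>n<K. (cmod (c n))\<^sup>2 / \<omega> n)"
  by (simp add: L2_set_def wmod_sq[symmetric] sum_nonneg)

lemma L2_set_wmod_le_wnorm: "c \<in> wl2 \<omega> \<Longrightarrow> L2_set (wmod \<omega> c) {..<K} \<le> wnorm \<omega> c"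
  using partial_sum_le_wsqnorm[of c K]
  by (simp add: L2_set_def wmod_sq wnorm_eq_sqrt_wsqnorm)

lemma wnorm_triangle:
  assumes c: "c \<in> wl2 \<omega>" and d: "d \<in> wl2 \<omega>"
  shows "wnorm \<omega> (\<lambda>n. c n + d n) \<le> wnorm \<omega> c + wnorm \<omega> d"
proof -
  have cd: "(\<lambda>n. c n + d n) \<in> wl2 \<omega>"
    using c d by (rule wl2_add)
  have "L2_set (wmod \<omega> (\<lambda>n. c n + d n)) {..<K} \<le> wnorm \<omega> c + wnorm \<omega> d" for K
  proof -
    have "L2_set (wmod \<omega> (\<lambda>n. c n + d n)) {..<K} \<le> L2_set (\<lambda>n. wmod \<omega> c n + wmod \<omega> d n) {..<K}"
      using c d cd by (intro L2_set_mono wmod_add_le wmod_nonneg)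
    also have "\<dots> \<le> L2_set (wmod \<omega> c) {..<K} + L2_set (wmod \<omega> d) {..<K}"
      by (rule L2_set_triangle_ineq)
    also have "\<dots> \<le> wnorm \<omega> c + wnorm \<omega> d"
      using c d by (intro add_mono L2_set_wmod_le_wnorm)
    finally show ?thesis .
  qed
  then have "(\<Sum>n<K. (cmod (c n + d n))\<^sup>2 / \<omega> n) \<le> (wnorm \<omega> c + wnorm \<omega> d)\<^sup>2" for K
    unfolding sq_L2_set_wmod[OF cd, symmetric] by (intro power_mono L2_set_nonneg)
  then have "wsqnorm \<omega> (\<lambda>n. c n + d n) \<le> (wnorm \<omega> c + wnorm \<omega> d)\<^sup>2"
    unfolding wsqnorm_def using cd by (intro suminf_le_const wl2_summable) auto
  then show ?thesis
    unfolding wnorm_eq_sqrt_wsqnorm[of \<omega> "\<lambda>n. c n + d n"]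
    by (rule real_le_lsqrt[rotated]) (intro add_nonneg_nonneg wnorm_nonneg c d)
qed

lemma wnorm_diff_le:
  assumes c: "c \<in> wl2 \<omega>" and d: "d \<in> wl2 \<omega>"
  shows "wnorm \<omega> (\<lambda>n. c n - d n) \<le> wnorm \<omega> c + wnorm \<omega> d"
proof -
  have "wnorm \<omega> (\<lambda>n. c n + (-1) * d n) \<le> wnorm \<omega> c + wnorm \<omega> (\<lambda>n. (-1) * d n)"
    using c d by (intro wnorm_triangle wl2_scale)
  then show ?thesis
    using wnorm_scale[OF d, of "-1"] by simp
qed

lemma wnorm_diff_triangle:
  assumes "a \<in> wl2 \<omega>" "b \<in> wl2 \<omega>" "c \<in> wl2 \<omega>"
  shows "wnorm \<omega> (\<lambda>n. a n - c n) \<le> wnorm \<omega> (\<lambda>n. a n - b n) + wnorm \<omega> (\<lambda>n. b n - c n)"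
  using wnorm_triangle[of "\<lambda>n. a n - b n" "\<lambda>n. b n - c n"] assms by (simp add: wl2_diff)

lemma wnorm_diff_diff_le:
  assumes "a \<in> wl2 \<omega>" "b \<in> wl2 \<omega>" "c \<in> wl2 \<omega>" "d \<in> wl2 \<omega>"
  shows "wnorm \<omega> (\<lambda>p. (a p - b p) - (c p - d p))
           \<le> wnorm \<omega> (\<lambda>p. a p - c p) + wnorm \<omega> (\<lambda>p. b p - d p)"
proof -
  have "(\<lambda>p. (a p - b p) - (c p - d p)) = (\<lambda>p. (a p - c p) - (b p - d p))"
    by (simp add: fun_eq_iff algebra_simps)
  then show ?thesis
    using assms by (simp add: wnorm_diff_le wl2_diff)
qed

end

section \<open>Closure of a complex span\<close>

lemma cspanI: "(\<And>i. i < (N::nat) \<Longrightarrow> v i \<in> S) \<Longrightarrow> (\<lambda>n. \<Sum>i<N. a i * v i n) \<in> cspan S"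
  unfolding cspan_def by auto

lemma cspanE:
  assumes "d \<in> cspan S"
  obtains N a v where "\<And>i. i < (N::nat) \<Longrightarrow> v i \<in> S" "d = (\<lambda>n. \<Sum>i<N. a i * v i n)"
  using assms unfolding cspan_def by auto

lemma cspan_zero: "(\<lambda>n. 0) \<in> cspan S"
  unfolding cspan_def by force

lemma cspan_add:
  assumes "d \<in> cspan S" "d' \<in> cspan S"
  shows "(\<lambda>n. d n + d' n) \<in> cspan S"
proof -
  obtain N a v where v: "\<And>i. i < (N::nat) \<Longrightarrow> v i \<in> S" and d: "d = (\<lambda>n. \<Sum>i<N. a i * v i n)"
    using assms(1) by (blast elim: cspanE)
  obtain N' a' v' where v': "\<And>i. i < (N'::nat) \<Longrightarrow> v' i \<in> S" and d': "d' = (\<lambda>n. \<Sum>i<N'. a' i * v' i n)"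
    using assms(2) by (blast elim: cspanE)
  define b where "b i = (if i < N then a i else a' (i - N))" for i
  define w where "w i = (if i < N then v i else v' (i - N))" for i
  have split: "(\<Sum>i<N + M. f i) = (\<Sum>i<N. f i) + (\<Sum>j<M. f (N + j))" for M and f :: "nat \<Rightarrow> complex"
    by (induction M) (simp_all add: add.assoc)
  have "(\<lambda>n. d n + d' n) = (\<lambda>n. \<Sum>i<N + N'. b i * w i n)"
    by (simp add: d d' b_def w_def split)
  moreover have "w i \<in> S" if "i < N + N'" for i
    using that v v' by (simp add: w_def)
  ultimately show ?thesis
    by (simp add: cspanI)
qed

lemma cspan_scale:
  assumes "d \<in> cspan S"
  shows "(\<lambda>n. s * d n) \<in> cspan S"
proof -
  obtain N a v where v: "\<And>i. i < (N::nat) \<Longrightarrow> v i \<in> S" and d: "d = (\<lambda>n. \<Sum>i<N. a i * v i n)"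
    using assms by (blast elim: cspanE)
  have "(\<lambda>n. s * d n) = (\<lambda>n. \<Sum>i<N. (s * a i) * v i n)"
    by (simp add: d sum_distrib_left mult.assoc)
  then show ?thesis
    using cspanI[OF v] by simp
qed

lemma cspan_mono: "S \<subseteq> S' \<Longrightarrow> cspan S \<subseteq> cspan S'"
  unfolding cspan_def by blast

definition span_closure :: "(nat \<Rightarrow> real) \<Rightarrow> (nat \<Rightarrow> complex) set \<Rightarrow> (nat \<Rightarrow> complex) set" where
  "span_closure \<omega> S =
     {v \<in> wl2 \<omega>. \<forall>\<epsilon>>0. \<exists>d \<in> cspan S \<inter> wl2 \<omega>. wnorm \<omega> (\<lambda>n. v n - d n) < \<epsilon>}"

lemma span_closure_wl2: "v \<in> span_closure \<omega> S \<Longrightarrow> v \<in> wl2 \<omega>"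
  by (simp add: span_closure_def)

lemma span_closureD:
  "v \<in> span_closure \<omega> S \<Longrightarrow> 0 < \<epsilon> \<Longrightarrow> \<exists>d \<in> cspan S \<inter> wl2 \<omega>. wnorm \<omega> (\<lambda>n. v n - d n) < \<epsilon>"
  by (simp add: span_closure_def)

lemma dense_in_Xw_if_wl2_subset:
  assumes "wl2 \<omega> \<subseteq> span_closure \<omega> S"
  shows "dense_in_Xw \<omega> (cspan S)"
  unfolding dense_in_Xw_def
proof (intro ballI allI impI)
  fix c and \<epsilon> :: real
  assume "c \<in> Xw \<omega>" "0 < \<epsilon>"
  then have "c \<in> span_closure \<omega> S"
    using assms Xw_subset_wl2 by blast
  then show "\<exists>d\<in>cspan S. wnorm \<omega> (\<lambda>n. c n - d n) < \<epsilon>"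
    using span_closureD[of c \<omega> S \<epsilon>] \<open>0 < \<epsilon>\<close> by auto
qed

lemma dense_in_Xw_cspan_mono:
  assumes "dense_in_Xw \<omega> (cspan S)" "S \<subseteq> S'"
  shows "dense_in_Xw \<omega> (cspan S')"
  unfolding dense_in_Xw_def
proof (intro ballI allI impI)
  fix c and \<epsilon> :: real
  assume "c \<in> Xw \<omega>" "0 < \<epsilon>"
  then obtain d where "d \<in> cspan S" "wnorm \<omega> (\<lambda>n. c n - d n) < \<epsilon>"
    using assms(1) unfolding dense_in_Xw_def by blast
  then show "\<exists>d\<in>cspan S'. wnorm \<omega> (\<lambda>n. c n - d n) < \<epsilon>"
    using cspan_mono[OF assms(2)] by blast
qed

lemma sum_indicator_singleton_image:
  assumes "inj_on f A" "finite A"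
  shows "(\<Sum>m\<in>A. indicator {f m} p) = (indicator (f ` A) p :: 'a::comm_ring_1)"
proof -
  have "(\<Sum>m\<in>A. indicator {f m} p) = (\<Sum>q\<in>f ` A. indicator {q} p :: 'a)"
    by (simp add: sum.reindex[OF assms(1)] o_def)
  also have "\<dots> = indicator (f ` A) p"
    using assms(2) by (simp add: indicator_def sum.delta)
  finally show ?thesis .
qed

context weight
begin

lemma span_closure_zero: "(\<lambda>n. 0) \<in> span_closure \<omega> S"
  unfolding span_closure_def using cspan_zero[of S] wl2_zero[of \<omega>]
  by (auto intro!: bexI[where x="\<lambda>n. 0"] simp: wnorm_def)

lemma span_closure_add:
  assumes v: "v \<in> span_closure \<omega> S" and w: "w \<in> span_closure \<omega> S"
  shows "(\<lambda>n. v n + w n) \<in> span_closure \<omega> S"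
  unfolding span_closure_def
proof (intro CollectI conjI allI impI)
  show vw: "(\<lambda>n. v n + w n) \<in> wl2 \<omega>"
    using v w by (simp add: span_closure_def wl2_add)
  fix \<epsilon> :: real assume "0 < \<epsilon>"
  then obtain d d' where d: "d \<in> cspan S \<inter> wl2 \<omega>" "wnorm \<omega> (\<lambda>n. v n - d n) < \<epsilon> / 2"
    and d': "d' \<in> cspan S \<inter> wl2 \<omega>" "wnorm \<omega> (\<lambda>n. w n - d' n) < \<epsilon> / 2"
    using span_closureD[OF v, of "\<epsilon> / 2"] span_closureD[OF w, of "\<epsilon> / 2"] by auto
  have "wnorm \<omega> (\<lambda>n. (v n - d n) + (w n - d' n)) \<le> wnorm \<omega> (\<lambda>n. v n - d n) + wnorm \<omega> (\<lambda>n. w n - d' n)"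
    using span_closure_wl2[OF v] span_closure_wl2[OF w] d d' by (intro wnorm_triangle wl2_diff) auto
  then have "wnorm \<omega> (\<lambda>n. v n + w n - (d n + d' n)) < \<epsilon>"
    using d d' by (simp add: algebra_simps)
  moreover have "(\<lambda>n. d n + d' n) \<in> cspan S \<inter> wl2 \<omega>"
    using d d' by (simp add: cspan_add wl2_add)
  ultimately show "\<exists>d\<in>cspan S \<inter> wl2 \<omega>. wnorm \<omega> (\<lambda>n. v n + w n - d n) < \<epsilon>"
    by (intro bexI[where x="\<lambda>n. d n + d' n"]) auto
qed

lemma span_closure_scale:
  assumes v: "v \<in> span_closure \<omega> S"
  shows "(\<lambda>n. s * v n) \<in> span_closure \<omega> S"
  unfolding span_closure_def
proof (intro CollectI conjI allI impI)
  have vl: "v \<in> wl2 \<omega>"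
    using v by (simp add: span_closure_def)
  then show "(\<lambda>n. s * v n) \<in> wl2 \<omega>"
    by (rule wl2_scale)
  fix \<epsilon> :: real assume "0 < \<epsilon>"
  then have "0 < \<epsilon> / (cmod s + 1)"
    by (simp add: add_nonneg_pos)
  then obtain d where d: "d \<in> cspan S \<inter> wl2 \<omega>" "wnorm \<omega> (\<lambda>n. v n - d n) < \<epsilon> / (cmod s + 1)"
    using v unfolding span_closure_def by blast
  have vd: "(\<lambda>n. v n - d n) \<in> wl2 \<omega>"
    using vl d by (simp add: wl2_diff)
  have "wnorm \<omega> (\<lambda>n. s * v n - s * d n) = cmod s * wnorm \<omega> (\<lambda>n. v n - d n)"
    using wnorm_scale[OF vd, of s] by (simp add: right_diff_distrib)
  also have "\<dots> \<le> (cmod s + 1) * wnorm \<omega> (\<lambda>n. v n - d n)"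
    using wnorm_nonneg[OF vd] by (simp add: mult_right_mono)
  also have "\<dots> < \<epsilon>"
    using d(2) by (simp add: pos_less_divide_eq mult.commute add_nonneg_pos)
  finally have "wnorm \<omega> (\<lambda>n. s * v n - s * d n) < \<epsilon>" .
  moreover have "(\<lambda>n. s * d n) \<in> cspan S \<inter> wl2 \<omega>"
    using d by (simp add: cspan_scale wl2_scale)
  ultimately show "\<exists>d\<in>cspan S \<inter> wl2 \<omega>. wnorm \<omega> (\<lambda>n. s * v n - d n) < \<epsilon>"
    by (intro bexI[where x="\<lambda>n. s * d n"]) auto
qed

lemma span_closure_diff:
  "v \<in> span_closure \<omega> S \<Longrightarrow> w \<in> span_closure \<omega> S \<Longrightarrow> (\<lambda>n. v n - w n) \<in> span_closure \<omega> S"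
  using span_closure_add[of v S "\<lambda>n. (-1) * w n"] span_closure_scale[of w S "-1"] by simp

lemma span_closure_sum:
  "(\<And>i. i \<in> A \<Longrightarrow> v i \<in> span_closure \<omega> S) \<Longrightarrow> (\<lambda>n. \<Sum>i\<in>A. v i n) \<in> span_closure \<omega> S"
  by (induction A rule: infinite_finite_induct) (simp_all add: span_closure_zero span_closure_add)

lemma span_closure_closed:
  assumes v: "v \<in> wl2 \<omega>"
    and approx: "\<And>\<epsilon>. 0 < \<epsilon> \<Longrightarrow> \<exists>w \<in> span_closure \<omega> S. wnorm \<omega> (\<lambda>n. v n - w n) < \<epsilon>"
  shows "v \<in> span_closure \<omega> S"
  unfolding span_closure_def
proof (intro CollectI conjI allI impI v)
  fix \<epsilon> :: real assume "0 < \<epsilon>"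
  then obtain w where w: "w \<in> span_closure \<omega> S" "wnorm \<omega> (\<lambda>n. v n - w n) < \<epsilon> / 2"
    using approx half_gt_zero by blast
  obtain d where d: "d \<in> cspan S \<inter> wl2 \<omega>" "wnorm \<omega> (\<lambda>n. w n - d n) < \<epsilon> / 2"
    using span_closureD[OF w(1), of "\<epsilon> / 2"] \<open>0 < \<epsilon>\<close> by auto
  have "wnorm \<omega> (\<lambda>n. v n - d n) \<le> wnorm \<omega> (\<lambda>n. v n - w n) + wnorm \<omega> (\<lambda>n. w n - d n)"
    using v span_closure_wl2[OF w(1)] d by (intro wnorm_diff_triangle) auto
  then have "wnorm \<omega> (\<lambda>n. v n - d n) < \<epsilon>"
    using w d by linarith
  then show "\<exists>d\<in>cspan S \<inter> wl2 \<omega>. wnorm \<omega> (\<lambda>n. v n - d n) < \<epsilon>"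
    using d by blast
qed

lemma span_closure_if_tendsto:
  assumes "v \<in> wl2 \<omega>" "\<And>N. d N \<in> cspan S \<inter> wl2 \<omega>"
    and "(\<lambda>N. wnorm \<omega> (\<lambda>n. v n - d N n)) \<longlonglongrightarrow> 0"
  shows "v \<in> span_closure \<omega> S"
  unfolding span_closure_def
proof (intro CollectI conjI allI impI assms(1))
  fix \<epsilon> :: real assume "0 < \<epsilon>"
  then have "eventually (\<lambda>N. wnorm \<omega> (\<lambda>n. v n - d N n) < \<epsilon>) sequentially"
    by (rule order_tendstoD(2)[OF assms(3)])
  then obtain N where "wnorm \<omega> (\<lambda>n. v n - d N n) < \<epsilon>"
    unfolding eventually_sequentially by blast
  then show "\<exists>d\<in>cspan S \<inter> wl2 \<omega>. wnorm \<omega> (\<lambda>n. v n - d n) < \<epsilon>"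
    using assms(2) by blast
qed

lemma wsqnorm_scaled_indicator_le:
  assumes "finite F" "0 < \<delta>" "\<And>p. p \<in> F \<Longrightarrow> \<delta> \<le> \<omega> p"
  shows "wsqnorm \<omega> (\<lambda>p. of_real a * indicator F p) \<le> real (card F) * a\<^sup>2 / \<delta>"
proof -
  have "wsqnorm \<omega> (\<lambda>p. of_real a * indicator F p) = (\<Sum>p\<in>F. (cmod (of_real a * indicator F p))\<^sup>2 / \<omega> p)"
    unfolding wsqnorm_def by (rule suminf_finite[OF assms(1)]) simp
  also have "\<dots> = (\<Sum>p\<in>F. a\<^sup>2 / \<omega> p)"
    by (rule sum.cong) (simp_all add: norm_mult)
  also have "\<dots> \<le> (\<Sum>p\<in>F. a\<^sup>2 / \<delta>)"
  proof (rule sum_mono)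
    fix p assume "p \<in> F"
    then have "\<delta> \<le> \<omega> p"
      by (rule assms(3))
    then show "a\<^sup>2 / \<omega> p \<le> a\<^sup>2 / \<delta>"
      using assms(2) by (intro divide_left_mono) auto
  qed
  also have "\<dots> = real (card F) * a\<^sup>2 / \<delta>"
    by simp
  finally show ?thesis .
qed

lemma telescoping_in_span_closure:
  assumes "\<And>m. (\<lambda>p. indicator {xs m} p - indicator {xs (Suc m)} p) \<in> span_closure \<omega> S"
  shows "(\<lambda>p. indicator {xs 0} p - indicator {xs m} p) \<in> span_closure \<omega> S"
proof (induction m)
  case 0
  show ?case
    using span_closure_zero by simp
next
  case (Suc m)
  have "(\<lambda>p. (indicator {xs 0} p - indicator {xs m} p) + (indicator {xs m} p - indicator {xs (Suc m)} p))
          \<in> span_closure \<omega> S"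
    using Suc assms by (rule span_closure_add)
  then show ?case
    by simp
qed

lemma linked_sequence:
  assumes linked: "\<And>x. 3 \<le> x \<Longrightarrow> \<exists>y>x. (\<lambda>p. indicator {x} p - indicator {y} p) \<in> span_closure \<omega> S"
    and x: "3 \<le> x"
  obtains xs :: "nat \<Rightarrow> nat" where "xs 0 = x" "strict_mono xs" "\<And>m. 3 \<le> xs m"
    "\<And>m. (\<lambda>p. indicator {xs m} p - indicator {xs (Suc m)} p) \<in> span_closure \<omega> S"
proof -
  obtain succ where succ: "\<And>x. 3 \<le> x \<Longrightarrow> x < succ x
      \<and> (\<lambda>p. indicator {x} p - indicator {succ x} p) \<in> span_closure \<omega> S"
    using linked by metis
  define xs where "xs m = (succ ^^ m) x" for m
  have xs_Suc: "xs (Suc m) = succ (xs m)" for m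
    by (simp add: xs_def)
  have xs_ge: "3 \<le> xs m" for m
  proof (induction m)
    case 0
    then show ?case
      using x by (simp add: xs_def)
  next
    case (Suc m)
    then show ?case
      using succ[OF Suc] by (simp add: xs_Suc)
  qed
  show ?thesis
  proof (rule that[of xs])
    show "xs 0 = x"
      by (simp add: xs_def)
    show "3 \<le> xs m" for m
      by (rule xs_ge)
    show "strict_mono xs"
      using succ xs_ge by (simp add: strict_mono_Suc_iff xs_Suc)
    show "(\<lambda>p. indicator {xs m} p - indicator {xs (Suc m)} p) \<in> span_closure \<omega> S" for m
      using succ[OF xs_ge[of m]] by (simp add: xs_Suc)
  qed
qed

lemma indicator_in_span_closure_if_linked:
  assumes \<delta>: "0 < \<delta>" "\<And>n. 3 \<le> n \<Longrightarrow> \<delta> \<le> \<omega> n"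
    and linked: "\<And>x. 3 \<le> x \<Longrightarrow> \<exists>y>x. (\<lambda>p. indicator {x} p - indicator {y} p) \<in> span_closure \<omega> S"
    and x: "3 \<le> x"
  shows "indicator {x} \<in> span_closure \<omega> S"
proof -
  obtain xs :: "nat \<Rightarrow> nat" where xs: "xs 0 = x" "strict_mono xs" "\<And>m. 3 \<le> xs m"
    "\<And>m. (\<lambda>p. indicator {xs m} p - indicator {xs (Suc m)} p) \<in> span_closure \<omega> S"
    using linked_sequence[OF linked x] by blast
  show ?thesis
  proof (rule span_closure_closed)
    show "indicator {x} \<in> wl2 \<omega>"
      using x by (rule indicator_in_wl2)
    fix \<epsilon> :: real assume "0 < \<epsilon>"
    then obtain M :: nat where "0 < M" "inverse (real M) < \<delta> * \<epsilon>\<^sup>2"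
      using ex_inverse_of_nat_less[of "\<delta> * \<epsilon>\<^sup>2"] \<delta>(1) by auto
    then have M: "1 / (real M * \<delta>) < \<epsilon>\<^sup>2"
      using \<delta>(1) by (simp add: field_simps)
    define w :: "nat \<Rightarrow> complex"
      where "w = (\<lambda>p. of_real (1 / real M) * (\<Sum>m<M. indicator {x} p - indicator {xs m} p))"
    have "w \<in> span_closure \<omega> S"
      unfolding w_def using telescoping_in_span_closure[where xs = xs, OF xs(4)] xs(1)
      by (intro span_closure_scale span_closure_sum) simp
    have "(\<lambda>p. indicator {x} p - w p) = (\<lambda>p. of_real (1 / real M) * indicator (xs ` {..<M}) p)"
      using \<open>0 < M\<close> strict_mono_imp_inj_on[OF xs(2)]
      by (simp add: fun_eq_iff w_def sum_subtractf sum_indicator_singleton_image field_simps)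
    moreover have "wsqnorm \<omega> (\<lambda>p. of_real (1 / real M) * indicator (xs ` {..<M}) p)
                     \<le> real (card (xs ` {..<M})) * (1 / real M)\<^sup>2 / \<delta>"
      using \<delta> xs(3) by (intro wsqnorm_scaled_indicator_le) auto
    moreover have "real (card (xs ` {..<M})) * (1 / real M)\<^sup>2 / \<delta> \<le> 1 / (real M * \<delta>)"
      using card_image_le[of "{..<M}" xs] \<open>0 < M\<close> \<delta>(1)
      by (simp add: power2_eq_square divide_right_mono field_simps)
    ultimately have "wnorm \<omega> (\<lambda>p. indicator {x} p - w p) < \<epsilon>"
      using M \<open>0 < \<epsilon>\<close> by (intro wnorm_less_if_wsqnorm_less) auto
    then show "\<exists>w\<in>span_closure \<omega> S. wnorm \<omega> (\<lambda>p. indicator {x} p - w p) < \<epsilon>"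
      using \<open>w \<in> span_closure \<omega> S\<close> by blast
  qed
qed

lemma wsqnorm_drop_initial:
  assumes "c \<in> wl2 \<omega>"
  shows "wsqnorm \<omega> (\<lambda>p. if p < K then 0 else c p) = wsqnorm \<omega> c - (\<Sum>n<K. (cmod (c n))\<^sup>2 / \<omega> n)"
proof -
  let ?g = "\<lambda>n. (cmod (c n))\<^sup>2 / \<omega> n"
  have "wsqnorm \<omega> (\<lambda>p. if p < K then 0 else c p) = (\<Sum>p. ?g p - (if p < K then ?g p else 0))"
    unfolding wsqnorm_def by (rule suminf_cong) simp
  also have "\<dots> = wsqnorm \<omega> c - (\<Sum>p. if p < K then ?g p else 0)"
    unfolding wsqnorm_def
    by (rule suminf_diff[OF wl2_summable[OF assms] summable_finite[of "{..<K}"], symmetric]) simp_all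
  also have "(\<Sum>p. if p < K then ?g p else 0) = (\<Sum>n<K. ?g n)"
    by (subst suminf_finite[of "{..<K}"]) simp_all
  finally show ?thesis .
qed

lemma wl2_subset_span_closure:
  assumes indicators: "\<And>x. 3 \<le> x \<Longrightarrow> indicator {x} \<in> span_closure \<omega> S"
  shows "wl2 \<omega> \<subseteq> span_closure \<omega> S"
proof
  fix c assume c: "c \<in> wl2 \<omega>"
  show "c \<in> span_closure \<omega> S"
  proof (rule span_closure_closed[OF c])
    fix \<epsilon> :: real assume "0 < \<epsilon>"
    have "(\<lambda>K. \<Sum>n<K. (cmod (c n))\<^sup>2 / \<omega> n) \<longlonglongrightarrow> wsqnorm \<omega> c"
      unfolding wsqnorm_def by (rule summable_LIMSEQ[OF wl2_summable[OF c]])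
    then have "eventually (\<lambda>K. wsqnorm \<omega> c - \<epsilon>\<^sup>2 < (\<Sum>n<K. (cmod (c n))\<^sup>2 / \<omega> n)) sequentially"
      using \<open>0 < \<epsilon>\<close> by (intro order_tendstoD(1)) auto
    then obtain K where K: "wsqnorm \<omega> c - \<epsilon>\<^sup>2 < (\<Sum>n<K. (cmod (c n))\<^sup>2 / \<omega> n)"
      unfolding eventually_sequentially by blast
    define w where "w = (\<lambda>p. \<Sum>x<K. c x * indicator {x} p)"
    have "(\<lambda>p. c x * indicator {x} p) \<in> span_closure \<omega> S" for x
    proof (cases "x < 3")
      case True
      then show ?thesis
        using c span_closure_zero by (simp add: wl2_def)
    next
      case False
      then show ?thesis
        using indicators by (intro span_closure_scale) simp
    qed
    then have "w \<in> span_closure \<omega> S"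
      unfolding w_def by (intro span_closure_sum)
    have "(\<lambda>p. c p - w p) = (\<lambda>p. if p < K then 0 else c p)"
      by (simp add: fun_eq_iff w_def indicator_def sum.delta')
    then have "wsqnorm \<omega> (\<lambda>p. c p - w p) < \<epsilon>\<^sup>2"
      using K by (simp add: wsqnorm_drop_initial[OF c])
    then have "wnorm \<omega> (\<lambda>p. c p - w p) < \<epsilon>"
      using \<open>0 < \<epsilon>\<close> by (rule wnorm_less_if_wsqnorm_less)
    then show "\<exists>w\<in>span_closure \<omega> S. wnorm \<omega> (\<lambda>n. c n - w n) < \<epsilon>"
      using \<open>w \<in> span_closure \<omega> S\<close> by blast
  qed
qed

end

section \<open>Preimages under the Collatz map\<close>

lemma collatz_eq_iff: "collatz j = m \<longleftrightarrow> j = 2 * m \<or> (m mod 3 = 2 \<and> j = 2 * (m div 3) + 1)"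
proof (cases "even j")
  case True
  then show ?thesis
    unfolding collatz_def by auto
next
  case False
  then obtain h where "j = 2 * h + 1"
    by (blast elim: oddE)
  then show ?thesis
    unfolding collatz_def by (auto; presburger)
qed

lemma Top_eq:
  assumes "3 \<le> m"
  shows "Top c m = c (2 * m) + (if m mod 3 = 2 then c (2 * (m div 3) + 1) else 0)"
proof (cases "m mod 3 = 2")
  case True
  then have "3 \<le> 2 * (m div 3) + 1" "2 * m \<noteq> 2 * (m div 3) + 1"
    using assms by presburger+
  then have "{j. 3 \<le> j \<and> collatz j = m} = {2 * m, 2 * (m div 3) + 1}"
    using assms True unfolding collatz_eq_iff by auto
  then show ?thesis
    using assms True \<open>2 * m \<noteq> _\<close> by (simp add: Top_def)
next
  case False
  then have "{j. 3 \<le> j \<and> collatz j = m} = {2 * m}"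
    using assms unfolding collatz_eq_iff by auto
  then show ?thesis
    using assms False by (simp add: Top_def)
qed

lemma Top_diff: "Top (\<lambda>p. c p - d p) m = Top c m - Top d m"
  by (simp add: Top_def sum_subtractf)

section \<open>Geometric sequences along doubling chains\<close>

definition chain_seq :: "nat \<Rightarrow> (nat \<Rightarrow> complex) \<Rightarrow> nat \<Rightarrow> complex" where
  "chain_seq k t p = (if \<exists>i. p = k * 2 ^ i then t (THE i. p = k * 2 ^ i) else 0)"

lemma le_mult_power2: "(k::nat) \<le> k * 2 ^ i"
  using mult_le_mono2[of 1 "2 ^ i" k] by simp

lemma strict_mono_chain: "0 < (k::nat) \<Longrightarrow> strict_mono (\<lambda>i::nat. k * 2 ^ i)"
  by (simp add: strict_mono_def)

lemma chain_seq_at: "0 < k \<Longrightarrow> chain_seq k t (k * 2 ^ i) = t i"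
  by (auto simp: chain_seq_def)

lemma chain_seq_off: "p \<notin> range (\<lambda>i. k * 2 ^ i) \<Longrightarrow> chain_seq k t p = 0"
  by (auto simp: chain_seq_def)

lemma chain_seq_below:
  assumes "p < k"
  shows "chain_seq k t p = 0"
proof (rule chain_seq_off)
  show "p \<notin> range (\<lambda>i. k * 2 ^ i)"
  proof
    assume "p \<in> range (\<lambda>i. k * 2 ^ i)"
    then obtain i where "p = k * 2 ^ i"
      by blast
    then show False
      using assms le_mult_power2[of k i] by simp
  qed
qed

lemma chain_seq_odd:
  assumes "0 < k" "odd p"
  shows "chain_seq k t p = (if p = k then t 0 else 0)"
proof (cases "p \<in> range (\<lambda>i. k * 2 ^ i)")
  case True
  then obtain i where i: "p = k * 2 ^ i"
    by blast
  with assms(2) have "i = 0"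
    by (cases i) auto
  then show ?thesis
    using i chain_seq_at[OF assms(1), of t 0] by simp
next
  case False
  then have "p \<noteq> k"
    using image_eqI[of k "\<lambda>i. k * 2 ^ i" 0] by auto
  then show ?thesis
    using False by (simp add: chain_seq_off)
qed

lemma double_in_chain_iff:
  "2 * m \<in> range (\<lambda>i. (k::nat) * 2 ^ i) \<longleftrightarrow> 2 * m = k \<or> m \<in> range (\<lambda>i. k * 2 ^ i)"
proof
  assume "2 * m \<in> range (\<lambda>i. k * 2 ^ i)"
  then obtain i where i: "2 * m = k * 2 ^ i"
    by blast
  then show "2 * m = k \<or> m \<in> range (\<lambda>i. k * 2 ^ i)"
    by (cases i) auto
next
  assume "2 * m = k \<or> m \<in> range (\<lambda>i. k * 2 ^ i)"
  then show "2 * m \<in> range (\<lambda>i. k * 2 ^ i)"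
  proof
    assume "2 * m = k"
    then show ?thesis
      using image_eqI[of "2 * m" "\<lambda>i. k * 2 ^ i" 0] by simp
  next
    assume "m \<in> range (\<lambda>i. k * 2 ^ i)"
    then obtain i where "m = k * 2 ^ i"
      by blast
    then show ?thesis
      using image_eqI[of "2 * m" "\<lambda>i. k * 2 ^ i" "Suc i"] by simp
  qed
qed

lemma chain_seq_power_double:
  assumes k: "0 < k"
  shows "chain_seq k ((^) \<mu>) (2 * m) = \<mu> * chain_seq k ((^) \<mu>) m + (if 2 * m = k then 1 else 0)"
proof (cases "m \<in> range (\<lambda>i. k * 2 ^ i)")
  case True
  then obtain i where m: "m = k * 2 ^ i"
    by blast
  have double: "2 * m = k * 2 ^ Suc i"
    by (simp add: m)
  have "2 * m \<noteq> k"
    using k le_mult_power2[of k i] m by linarith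
  moreover have "chain_seq k ((^) \<mu>) (2 * m) = \<mu> ^ Suc i"
    unfolding double by (rule chain_seq_at[OF k])
  moreover have "chain_seq k ((^) \<mu>) m = \<mu> ^ i"
    unfolding m by (rule chain_seq_at[OF k])
  ultimately show ?thesis
    by simp
next
  case False
  then have "chain_seq k ((^) \<mu>) m = 0"
    by (rule chain_seq_off)
  moreover have "chain_seq k ((^) \<mu>) (2 * m) = (if 2 * m = k then 1 else 0)"
    using False chain_seq_at[OF k, of "(^) \<mu>" 0] double_in_chain_iff[of m k]
    by (auto intro: chain_seq_off)
  ultimately show ?thesis
    by simp
qed

lemma Top_power_chain:
  assumes k: "3 \<le> k" and m: "3 \<le> m"
  shows "Top (chain_seq k ((^) \<mu>)) m = \<mu> * chain_seq k ((^) \<mu>) m + (if collatz k = m then 1 else 0)"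
proof -
  have "2 * m \<noteq> 2 * (m div 3) + 1"
    by presburger
  moreover have "chain_seq k ((^) \<mu>) (2 * (m div 3) + 1) = (if 2 * (m div 3) + 1 = k then 1 else 0)"
    using k by (simp add: chain_seq_odd)
  ultimately show ?thesis
    using k by (auto simp: Top_eq[OF m] chain_seq_power_double collatz_eq_iff[of k m])
qed

definition collatz_eigvec :: "nat \<Rightarrow> complex \<Rightarrow> nat \<Rightarrow> complex" where
  "collatz_eigvec k \<mu> = (\<lambda>p. chain_seq k ((^) \<mu>) p - chain_seq (3 * k + 1) ((^) \<mu>) p)"

lemma Top_collatz_eigvec:
  assumes "odd k" "3 \<le> k"
  shows "Top (collatz_eigvec k \<mu>) = (\<lambda>n. \<mu> * collatz_eigvec k \<mu> n)"
proof
  fix m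
  show "Top (collatz_eigvec k \<mu>) m = \<mu> * collatz_eigvec k \<mu> m"
  proof (cases "3 \<le> m")
    case True
    have "even (3 * k + 1)"
      using assms(1) by simp
    then have "collatz (3 * k + 1) = collatz k"
      using assms(1) by (simp add: collatz_def)
    then show ?thesis
      using True assms(2) by (simp add: collatz_eigvec_def Top_diff Top_power_chain algebra_simps)
  next
    case False
    then show ?thesis
      using assms(2) by (simp add: Top_def collatz_eigvec_def chain_seq_below)
  qed
qed

lemma Top_power_chain_4: "Top (chain_seq 4 ((^) \<mu>)) = (\<lambda>n. \<mu> * chain_seq 4 ((^) \<mu>) n)"
proof
  fix m
  show "Top (chain_seq 4 ((^) \<mu>)) m = \<mu> * chain_seq 4 ((^) \<mu>) m"
  proof (cases "3 \<le> m")
    case True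
    have "collatz 4 = 2"
      by (simp add: collatz_def)
    then show ?thesis
      using Top_power_chain[of 4 m \<mu>] True by simp
  next
    case False
    then show ?thesis
      by (simp add: Top_def chain_seq_below)
  qed
qed

lemma summable_power_chain_series:
  assumes k: "0 < k" and z: "cmod z < 1"
  shows "summable (\<lambda>p. chain_seq k ((^) \<mu>) p * z ^ p)"
proof -
  define f where "f i = \<mu> ^ i * z ^ (k * 2 ^ i)" for i
  have "(\<lambda>n. cmod z ^ n) \<longlonglongrightarrow> 0"
    using z by (simp add: LIMSEQ_power_zero)
  then have "(\<lambda>i. cmod z ^ (k * 2 ^ i)) \<longlonglongrightarrow> 0"
    using LIMSEQ_subseq_LIMSEQ[OF _ strict_mono_chain[OF k]] by (simp add: o_def)
  then have "(\<lambda>i. cmod \<mu> * cmod z ^ (k * 2 ^ i)) \<longlonglongrightarrow> cmod \<mu> * 0"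
    by (rule tendsto_mult_left)
  then have "eventually (\<lambda>i. cmod \<mu> * cmod z ^ (k * 2 ^ i) < 1 / 2) sequentially"
    by (rule order_tendstoD(2)) simp
  then obtain N where N: "\<And>i. N \<le> i \<Longrightarrow> cmod \<mu> * cmod z ^ (k * 2 ^ i) < 1 / 2"
    unfolding eventually_sequentially by blast
  have "summable f"
  proof (rule summable_ratio_test[of "1 / 2" N])
    fix i assume "N \<le> i"
    have "k * 2 ^ Suc i = k * 2 ^ i + k * 2 ^ i"
      by simp
    then have "norm (f (Suc i)) = (cmod \<mu> * cmod z ^ (k * 2 ^ i)) * norm (f i)"
      by (simp only: f_def norm_mult norm_power power_add power_Suc mult_ac)
    also have "\<dots> \<le> 1 / 2 * norm (f i)"
      using N[OF \<open>N \<le> i\<close>] by (intro mult_right_mono) auto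
    finally show "norm (f (Suc i)) \<le> 1 / 2 * norm (f i)" .
  qed simp
  moreover have "(\<lambda>i. chain_seq k ((^) \<mu>) (k * 2 ^ i) * z ^ (k * 2 ^ i)) = f"
    by (simp add: fun_eq_iff f_def chain_seq_at[OF k])
  ultimately show ?thesis
    by (subst summable_mono_reindex[OF strict_mono_chain[OF k], symmetric]) (auto simp: chain_seq_off)
qed

lemma wsqnorm_chain_seq:
  assumes "0 < k"
  shows "wsqnorm \<omega> (chain_seq k t) = (\<Sum>i. (cmod (t i))\<^sup>2 / \<omega> (k * 2 ^ i))"
proof -
  have "(\<Sum>i. (cmod (chain_seq k t (k * 2 ^ i)))\<^sup>2 / \<omega> (k * 2 ^ i)) = wsqnorm \<omega> (chain_seq k t)"
    unfolding wsqnorm_def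
    by (rule suminf_mono_reindex[OF strict_mono_chain[OF assms]]) (simp add: chain_seq_off)
  then show ?thesis
    by (simp add: chain_seq_at[OF assms])
qed

lemma chain_seq_in_wl2_iff:
  assumes "3 \<le> k"
  shows "chain_seq k t \<in> wl2 \<omega> \<longleftrightarrow> summable (\<lambda>i. (cmod (t i))\<^sup>2 / \<omega> (k * 2 ^ i))"
proof -
  have k: "0 < k"
    using assms by simp
  have "summable (\<lambda>i. (cmod (chain_seq k t (k * 2 ^ i)))\<^sup>2 / \<omega> (k * 2 ^ i))
          \<longleftrightarrow> summable (\<lambda>p. (cmod (chain_seq k t p))\<^sup>2 / \<omega> p)"
    by (rule summable_mono_reindex[OF strict_mono_chain[OF k]]) (simp add: chain_seq_off)
  moreover have "\<forall>n<3. chain_seq k t n = 0"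
    using assms by (simp add: chain_seq_below)
  ultimately show ?thesis
    by (simp add: wl2_def chain_seq_at[OF k])
qed

lemma summable_power_sq_over_power:
  assumes "0 < \<rho>" "(cmod \<mu>)\<^sup>2 < \<rho>"
  shows "summable (\<lambda>i. (cmod (\<mu> ^ i))\<^sup>2 / \<rho> ^ i)"
proof -
  have "(\<lambda>i. (cmod (\<mu> ^ i))\<^sup>2 / \<rho> ^ i) = (\<lambda>i. ((cmod \<mu>)\<^sup>2 / \<rho>) ^ i)"
    by (simp add: norm_power power_divide power2_eq_square power_mult_distrib)
  moreover have "norm ((cmod \<mu>)\<^sup>2 / \<rho>) < 1"
    using assms by simp
  ultimately show ?thesis
    by (simp add: summable_geometric)
qed

context weight
begin

lemma Xw_diff: "c \<in> Xw \<omega> \<Longrightarrow> d \<in> Xw \<omega> \<Longrightarrow> (\<lambda>n. c n - d n) \<in> Xw \<omega>"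
  unfolding Xw_eq by (auto simp: wl2_diff left_diff_distrib intro: summable_diff)

lemma chain_seq_wl2_bound:
  assumes k: "3 \<le> k" and \<rho>: "0 < \<rho>" and B: "\<forall>i. \<rho> ^ i / \<omega> (k * 2 ^ i) \<le> B"
    and t: "summable (\<lambda>i. (cmod (t i))\<^sup>2 / \<rho> ^ i)"
  shows "chain_seq k t \<in> wl2 \<omega>"
    and "wsqnorm \<omega> (chain_seq k t) \<le> B * (\<Sum>i. (cmod (t i))\<^sup>2 / \<rho> ^ i)"
proof -
  have le: "(cmod (t i))\<^sup>2 / \<omega> (k * 2 ^ i) \<le> B * ((cmod (t i))\<^sup>2 / \<rho> ^ i)" for i
  proof -
    have "(cmod (t i))\<^sup>2 / \<omega> (k * 2 ^ i) = ((cmod (t i))\<^sup>2 / \<rho> ^ i) * (\<rho> ^ i / \<omega> (k * 2 ^ i))"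
      using \<rho> by simp
    also have "\<dots> \<le> ((cmod (t i))\<^sup>2 / \<rho> ^ i) * B"
      using B \<rho> by (intro mult_left_mono) auto
    finally show ?thesis
      by (simp add: mult.commute)
  qed
  have nonneg: "0 \<le> (cmod (t i))\<^sup>2 / \<omega> (k * 2 ^ i)" for i
    using weight_pos[of "k * 2 ^ i"] k le_mult_power2[of k i] by simp
  have "norm ((cmod (t i))\<^sup>2 / \<omega> (k * 2 ^ i)) \<le> B * ((cmod (t i))\<^sup>2 / \<rho> ^ i)" for i
    using le[of i] abs_of_nonneg[OF nonneg[of i]] by (simp only: real_norm_def)
  moreover have Bt: "summable (\<lambda>i. B * ((cmod (t i))\<^sup>2 / \<rho> ^ i))"
    using t by (rule summable_mult)
  ultimately have summ: "summable (\<lambda>i. (cmod (t i))\<^sup>2 / \<omega> (k * 2 ^ i))"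
    by (rule summable_comparison_test'[rotated])
  then show "chain_seq k t \<in> wl2 \<omega>"
    using k by (simp add: chain_seq_in_wl2_iff)
  have "wsqnorm \<omega> (chain_seq k t) \<le> (\<Sum>i. B * ((cmod (t i))\<^sup>2 / \<rho> ^ i))"
    using k le summ Bt by (simp add: wsqnorm_chain_seq suminf_le)
  then show "wsqnorm \<omega> (chain_seq k t) \<le> B * (\<Sum>i. (cmod (t i))\<^sup>2 / \<rho> ^ i)"
    using suminf_mult[OF t, of B] by simp
qed

end

locale growth_weight = weight +
  fixes \<rho> :: real
  assumes growth: "\<And>k. 3 \<le> k \<Longrightarrow> \<exists>B. \<forall>i. \<rho> ^ i / \<omega> (k * 2 ^ i) \<le> B"
begin

lemma power_chain_in_Xw:
  assumes k: "3 \<le> k" and \<mu>: "(cmod \<mu>)\<^sup>2 < \<rho>"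
  shows "chain_seq k ((^) \<mu>) \<in> Xw \<omega>"
proof -
  obtain B where B: "\<forall>i. \<rho> ^ i / \<omega> (k * 2 ^ i) \<le> B"
    using growth[OF k] by blast
  have \<rho>: "0 < \<rho>"
    using \<mu> zero_le_power2[of "cmod \<mu>"] by linarith
  have "chain_seq k ((^) \<mu>) \<in> wl2 \<omega>"
    using chain_seq_wl2_bound(1)[OF k \<rho> B summable_power_sq_over_power[OF \<rho> \<mu>]] .
  moreover have "summable (\<lambda>n. chain_seq k ((^) \<mu>) n * z ^ n)" if "cmod z < 1" for z
    using k that by (intro summable_power_chain_series) auto
  ultimately show ?thesis
    by (simp add: Xw_eq)
qed

lemma collatz_eigvec_in_eigsp:
  assumes "odd k" "3 \<le> k" "(cmod \<mu>)\<^sup>2 < \<rho>"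
  shows "collatz_eigvec k \<mu> \<in> eigsp \<omega> \<mu>"
proof -
  have "collatz_eigvec k \<mu> \<in> Xw \<omega>"
    unfolding collatz_eigvec_def using assms by (intro Xw_diff power_chain_in_Xw) auto
  then show ?thesis
    using Top_collatz_eigvec[OF assms(1,2)] by (simp add: eigsp_def)
qed

lemma power_chain_4_in_eigsp: "(cmod \<mu>)\<^sup>2 < \<rho> \<Longrightarrow> chain_seq 4 ((^) \<mu>) \<in> eigsp \<omega> \<mu>"
  using power_chain_in_Xw[of 4 \<mu>] Top_power_chain_4 by (simp add: eigsp_def)

end

section \<open>Filtering by roots of unity\<close>

definition unit_root :: "nat \<Rightarrow> complex" where
  "unit_root N = exp (2 * of_real pi * \<i> / of_nat N)"

lemma unit_root_power: "unit_root N ^ m = exp (2 * of_real pi * \<i> * of_nat m / of_nat N)"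
  unfolding unit_root_def exp_of_nat_mult[symmetric] by (simp add: mult_ac)

lemma unit_root_power_eq_1: "0 < N \<Longrightarrow> unit_root N ^ m = 1 \<longleftrightarrow> N dvd m"
  unfolding unit_root_power by (simp add: complex_root_unity_eq_1)

lemma norm_unit_root [simp]: "cmod (unit_root N) = 1"
  by (simp add: unit_root_def)

lemma sum_unit_root_powers:
  assumes "0 < N"
  shows "(\<Sum>j<N. (unit_root N ^ m) ^ j) = (if N dvd m then of_nat N else 0)"
proof (cases "N dvd m")
  case True
  then have "unit_root N ^ m = 1"
    using assms by (simp add: unit_root_power_eq_1)
  then show ?thesis
    using True by simp
next
  case False
  then have "unit_root N ^ m \<noteq> 1"
    using assms by (simp add: unit_root_power_eq_1)
  moreover have "(unit_root N ^ m) ^ N = 1"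
    using assms by (simp add: unit_root_power_eq_1 flip: power_mult)
  ultimately show ?thesis
    using False by (simp add: geometric_sum)
qed

lemma dvd_add_mult_pred_iff:
  assumes "0 < N"
  shows "N dvd i + n * (N - 1) \<longleftrightarrow> i mod N = (n mod N :: nat)"
proof -
  have "int (n * (N - 1)) + int n = int n * int N"
    using assms by (cases N) (simp_all add: algebra_simps)
  then have "int (i + n * (N - 1)) = (int i - int n) + int n * int N"
    unfolding of_nat_add by linarith
  then have "N dvd i + n * (N - 1) \<longleftrightarrow> int N dvd int i - int n"
    by (metis dvd_add_times_triv_right_iff int_dvd_int_iff)
  also have "\<dots> \<longleftrightarrow> int i mod int N = int n mod int N"
    by (simp add: mod_eq_dvd_iff)
  also have "\<dots> \<longleftrightarrow> i mod N = n mod N"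
    by (metis of_nat_eq_iff zmod_int)
  finally show ?thesis .
qed

text \<open>\<open>(unit_root N ^ j) ^ (n * (N - 1))\<close> is the inverse of \<open>(unit_root N ^ j) ^ n\<close>,
  written without negative exponents.\<close>
definition root_filter :: "nat \<Rightarrow> real \<Rightarrow> nat \<Rightarrow> nat \<Rightarrow> nat \<Rightarrow> complex" where
  "root_filter k r N n = (\<lambda>p. \<Sum>j<N. (unit_root N ^ j) ^ (n * (N - 1)) / (of_nat N * of_real r ^ n)
                                    * chain_seq k ((^) (of_real r * unit_root N ^ j)) p)"

definition root_filter_error :: "real \<Rightarrow> nat \<Rightarrow> nat \<Rightarrow> nat \<Rightarrow> complex" where
  "root_filter_error r N n i = (if i \<noteq> n \<and> i mod N = n mod N then - of_real (r ^ i / r ^ n) else 0)"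

lemma root_filter_at:
  assumes "0 < k" "0 < N" "r \<noteq> 0"
  shows "root_filter k r N n (k * 2 ^ i) = (if i mod N = n mod N then of_real (r ^ i / r ^ n) else 0)"
proof -
  let ?\<zeta> = "unit_root N" and ?c = "of_real r ^ i / (of_nat N * of_real r ^ n) :: complex"
  have summand: "(?\<zeta> ^ j) ^ (n * (N - 1)) / (of_nat N * of_real r ^ n) * (of_real r * ?\<zeta> ^ j) ^ i
          = ?c * (?\<zeta> ^ (i + n * (N - 1))) ^ j" for j
  proof -
    have "(?\<zeta> ^ j) ^ (n * (N - 1)) * (?\<zeta> ^ j) ^ i = (?\<zeta> ^ (i + n * (N - 1))) ^ j"
      by (simp add: power_add[symmetric] power_mult[symmetric] algebra_simps)
    then show ?thesis
      by (simp add: power_mult_distrib mult_ac)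
  qed
  have "root_filter k r N n (k * 2 ^ i) = (\<Sum>j<N. ?c * (?\<zeta> ^ (i + n * (N - 1))) ^ j)"
    unfolding root_filter_def chain_seq_at[OF assms(1)] by (rule sum.cong[OF refl summand])
  also have "\<dots> = ?c * (\<Sum>j<N. (?\<zeta> ^ (i + n * (N - 1))) ^ j)"
    by (rule sum_distrib_left[symmetric])
  finally have "root_filter k r N n (k * 2 ^ i) = ?c * (\<Sum>j<N. (?\<zeta> ^ (i + n * (N - 1))) ^ j)" .
  then show ?thesis
    using assms dvd_add_mult_pred_iff[OF assms(2), of i n] by (simp add: sum_unit_root_powers)
qed

lemma root_filter_off: "p \<notin> range (\<lambda>i. k * 2 ^ i) \<Longrightarrow> root_filter k r N n p = 0"
  by (simp add: root_filter_def chain_seq_off)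

lemma indicator_minus_root_filter:
  assumes "0 < k" "n < N" "r \<noteq> 0"
  shows "(\<lambda>p. indicator {k * 2 ^ n} p - root_filter k r N n p) = chain_seq k (root_filter_error r N n)"
proof
  fix p
  show "indicator {k * 2 ^ n} p - root_filter k r N n p = chain_seq k (root_filter_error r N n) p"
  proof (cases "p \<in> range (\<lambda>i. k * 2 ^ i)")
    case True
    then obtain i where p: "p = k * 2 ^ i"
      by blast
    show ?thesis
    proof (cases "i = n")
      case True
      then show ?thesis
        using assms by (simp add: p root_filter_at chain_seq_at root_filter_error_def)
    next
      case False
      then have "k * 2 ^ i \<noteq> k * 2 ^ n"
        using assms(1) by simp
      then show ?thesis
        using assms False by (simp add: p root_filter_at chain_seq_at root_filter_error_def)
    qed
  next
    case False
    then have "p \<noteq> k * 2 ^ n"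
      by blast
    then show ?thesis
      using False by (simp add: root_filter_off chain_seq_off)
  qed
qed

lemma root_filter_error_le:
  assumes "0 < r" "r\<^sup>2 < \<rho>" "n < N"
  shows "(cmod (root_filter_error r N n i))\<^sup>2 / \<rho> ^ i \<le> sqrt (r\<^sup>2 / \<rho>) ^ (N + i) / (r ^ n)\<^sup>2"
proof -
  define s where "s = sqrt (r\<^sup>2 / \<rho>)"
  have "0 < \<rho>"
    using assms(1,2) zero_less_power[OF assms(1), of 2] by linarith
  then have s: "0 \<le> s" "s \<le> 1" "s\<^sup>2 = r\<^sup>2 / \<rho>"
    using assms(2) by (auto simp: s_def)
  show ?thesis
  proof (cases "i \<noteq> n \<and> i mod N = n mod N")
    case True
    then have "N \<le> i"
      using assms(3) by (metis mod_less not_le)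
    have "(cmod (root_filter_error r N n i))\<^sup>2 / \<rho> ^ i = (r ^ i)\<^sup>2 / \<rho> ^ i / (r ^ n)\<^sup>2"
      using True by (simp add: root_filter_error_def norm_divide norm_power power_divide abs_of_pos[OF assms(1)])
    also have "\<dots> = (s\<^sup>2) ^ i / (r ^ n)\<^sup>2"
      by (simp add: s(3) power_divide power_mult[symmetric] mult.commute)
    also have "\<dots> \<le> s ^ (N + i) / (r ^ n)\<^sup>2"
    proof (intro divide_right_mono)
      have "s ^ i \<le> s ^ N"
        using \<open>N \<le> i\<close> s(1,2) by (rule power_decreasing)
      then have "s ^ i * s ^ i \<le> s ^ N * s ^ i"
        using s(1) by (simp add: mult_right_mono)
      then show "(s\<^sup>2) ^ i \<le> s ^ (N + i)"
        by (simp add: power2_eq_square power_mult_distrib power_add)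
    qed simp
    finally show ?thesis
      by (simp add: s_def)
  next
    case False
    then show ?thesis
      using s(1) by (auto simp: root_filter_error_def simp flip: s_def)
  qed
qed

lemma geometric_tail_sums:
  fixes s c :: real
  assumes "0 \<le> s" "s < 1"
  shows "(\<lambda>i. s ^ (N + i) / c) sums (s ^ N / ((1 - s) * c))"
  using sums_divide[OF sums_mult[OF geometric_sums, of s "s ^ N"], of c] assms
  by (simp add: power_add field_simps)

lemma root_filter_error_series_le:
  assumes "0 < r" "r\<^sup>2 < \<rho>" "n < N"
  shows "summable (\<lambda>i. (cmod (root_filter_error r N n i))\<^sup>2 / \<rho> ^ i)"
    and "(\<Sum>i. (cmod (root_filter_error r N n i))\<^sup>2 / \<rho> ^ i)
           \<le> sqrt (r\<^sup>2 / \<rho>) ^ N / ((1 - sqrt (r\<^sup>2 / \<rho>)) * (r ^ n)\<^sup>2)"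
proof -
  let ?s = "sqrt (r\<^sup>2 / \<rho>)"
  have "0 < \<rho>"
    using assms(1,2) zero_less_power[OF assms(1), of 2] by linarith
  then have bound_sums: "(\<lambda>i. ?s ^ (N + i) / (r ^ n)\<^sup>2) sums (?s ^ N / ((1 - ?s) * (r ^ n)\<^sup>2))"
    using assms by (intro geometric_tail_sums) auto
  have le: "(cmod (root_filter_error r N n i))\<^sup>2 / \<rho> ^ i \<le> ?s ^ (N + i) / (r ^ n)\<^sup>2" for i
    using assms by (rule root_filter_error_le)
  then have "norm ((cmod (root_filter_error r N n i))\<^sup>2 / \<rho> ^ i) \<le> ?s ^ (N + i) / (r ^ n)\<^sup>2" for i
    using \<open>0 < \<rho>\<close> by (simp add: abs_of_pos)
  then show summ: "summable (\<lambda>i. (cmod (root_filter_error r N n i))\<^sup>2 / \<rho> ^ i)"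
    by (rule summable_comparison_test'[OF sums_summable[OF bound_sums]])
  have "(\<Sum>i. (cmod (root_filter_error r N n i))\<^sup>2 / \<rho> ^ i) \<le> (\<Sum>i. ?s ^ (N + i) / (r ^ n)\<^sup>2)"
    by (rule suminf_le[OF le summ sums_summable[OF bound_sums]])
  also have "\<dots> = ?s ^ N / ((1 - ?s) * (r ^ n)\<^sup>2)"
    by (rule sums_unique[OF bound_sums, symmetric])
  finally show "(\<Sum>i. (cmod (root_filter_error r N n i))\<^sup>2 / \<rho> ^ i) \<le> ?s ^ N / ((1 - ?s) * (r ^ n)\<^sup>2)" .
qed

context weight
begin

lemma wsqnorm_indicator_minus_root_filter_le:
  assumes k: "3 \<le> k" and r: "0 < r" "r\<^sup>2 < \<rho>" and B: "\<forall>i. \<rho> ^ i / \<omega> (k * 2 ^ i) \<le> B"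
    and "n < N"
  shows "(\<lambda>p. indicator {k * 2 ^ n} p - root_filter k r N n p) \<in> wl2 \<omega>"
    and "wsqnorm \<omega> (\<lambda>p. indicator {k * 2 ^ n} p - root_filter k r N n p)
           \<le> B / ((1 - sqrt (r\<^sup>2 / \<rho>)) * (r ^ n)\<^sup>2) * sqrt (r\<^sup>2 / \<rho>) ^ N"
proof -
  have \<rho>: "0 < \<rho>"
    using r(2) zero_less_power[OF r(1), of 2] by linarith
  have "0 < \<rho> ^ 0 / \<omega> (k * 2 ^ 0)"
    using weight_pos[OF k] by simp
  then have B0: "0 \<le> B"
    using B[rule_format, of 0] by linarith
  have eq: "(\<lambda>p. indicator {k * 2 ^ n} p - root_filter k r N n p) = chain_seq k (root_filter_error r N n)"
    using k r \<open>n < N\<close> by (intro indicator_minus_root_filter) auto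
  note error = root_filter_error_series_le[OF r \<open>n < N\<close>]
  show "(\<lambda>p. indicator {k * 2 ^ n} p - root_filter k r N n p) \<in> wl2 \<omega>"
    unfolding eq using k \<rho> B error(1) by (rule chain_seq_wl2_bound(1))
  have "wsqnorm \<omega> (chain_seq k (root_filter_error r N n))
          \<le> B * (\<Sum>i. (cmod (root_filter_error r N n i))\<^sup>2 / \<rho> ^ i)"
    using k \<rho> B error(1) by (rule chain_seq_wl2_bound(2))
  also have "\<dots> \<le> B * (sqrt (r\<^sup>2 / \<rho>) ^ N / ((1 - sqrt (r\<^sup>2 / \<rho>)) * (r ^ n)\<^sup>2))"
    using error(2) B0 by (rule mult_left_mono)
  finally show "wsqnorm \<omega> (\<lambda>p. indicator {k * 2 ^ n} p - root_filter k r N n p)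
                  \<le> B / ((1 - sqrt (r\<^sup>2 / \<rho>)) * (r ^ n)\<^sup>2) * sqrt (r\<^sup>2 / \<rho>) ^ N"
    unfolding eq by simp
qed

end

context growth_weight
begin

lemma root_filter_in_wl2:
  assumes "3 \<le> k" "0 < r" "r\<^sup>2 < \<rho>"
  shows "root_filter k r N n \<in> wl2 \<omega>"
  unfolding root_filter_def using assms
  by (intro wl2_sum wl2_scale subsetD[OF Xw_subset_wl2] power_chain_in_Xw) (auto simp: norm_mult norm_power)

lemma indicator_minus_root_filter_tendsto:
  assumes k: "3 \<le> k" and r: "0 < r" "r\<^sup>2 < \<rho>"
  shows "(\<lambda>N. wnorm \<omega> (\<lambda>p. indicator {k * 2 ^ n} p - root_filter k r N n p)) \<longlonglongrightarrow> 0"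
proof -
  obtain B where B: "\<forall>i. \<rho> ^ i / \<omega> (k * 2 ^ i) \<le> B"
    using growth[OF k] by blast
  let ?s = "sqrt (r\<^sup>2 / \<rho>)" and ?C = "B / ((1 - sqrt (r\<^sup>2 / \<rho>)) * (r ^ n)\<^sup>2)"
  have "0 < \<rho>"
    using r(2) zero_less_power[OF r(1), of 2] by linarith
  then have "(\<lambda>N. sqrt (?C * ?s ^ N)) \<longlonglongrightarrow> sqrt (?C * 0)"
    using r by (intro tendsto_intros LIMSEQ_power_zero) auto
  then have lim: "(\<lambda>N. sqrt (?C * ?s ^ N)) \<longlonglongrightarrow> 0"
    by simp
  have ev: "eventually (\<lambda>N. 0 \<le> wnorm \<omega> (\<lambda>p. indicator {k * 2 ^ n} p - root_filter k r N n p)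
      \<and> wnorm \<omega> (\<lambda>p. indicator {k * 2 ^ n} p - root_filter k r N n p) \<le> sqrt (?C * ?s ^ N)) sequentially"
  proof (rule eventually_mono[OF eventually_gt_at_top[of n]])
    fix N assume "n < N"
    from wsqnorm_indicator_minus_root_filter_le[OF k r B this]
    show "0 \<le> wnorm \<omega> (\<lambda>p. indicator {k * 2 ^ n} p - root_filter k r N n p)
      \<and> wnorm \<omega> (\<lambda>p. indicator {k * 2 ^ n} p - root_filter k r N n p) \<le> sqrt (?C * ?s ^ N)"
      by (simp add: wsqnorm_nonneg wnorm_eq_sqrt_wsqnorm[of \<omega> "\<lambda>p. indicator {k * 2 ^ n} p - root_filter k r N n p"])
  qed
  show ?thesis
    by (rule tendsto_sandwich[OF _ _ tendsto_const lim]) (use ev in eventually_elim; simp)+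
qed

lemma indicator_4_pow2_in_span_closure:
  assumes r: "0 < r" "r\<^sup>2 < \<rho>"
  shows "indicator {4 * 2 ^ n} \<in> span_closure \<omega> (\<Union>\<mu>\<in>sphere 0 r. eigsp \<omega> \<mu>)"
proof (rule span_closure_if_tendsto[where d = "\<lambda>N. root_filter 4 r N n"])
  show "indicator {4 * 2 ^ n} \<in> wl2 \<omega>"
    by (rule indicator_in_wl2) (use le_mult_power2[of 4 n] in linarith)
  show "root_filter 4 r N n \<in> cspan (\<Union>\<mu>\<in>sphere 0 r. eigsp \<omega> \<mu>) \<inter> wl2 \<omega>" for N
  proof
    have "chain_seq 4 ((^) (of_real r * unit_root N ^ j)) \<in> (\<Union>\<mu>\<in>sphere 0 r. eigsp \<omega> \<mu>)" for j
      using r by (intro UN_I[of "of_real r * unit_root N ^ j"] power_chain_4_in_eigsp)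
        (auto simp: norm_mult norm_power)
    then show "root_filter 4 r N n \<in> cspan (\<Union>\<mu>\<in>sphere 0 r. eigsp \<omega> \<mu>)"
      unfolding root_filter_def by (rule cspanI)
    show "root_filter 4 r N n \<in> wl2 \<omega>"
      using r by (intro root_filter_in_wl2) auto
  qed
  show "(\<lambda>N. wnorm \<omega> (\<lambda>p. indicator {4 * 2 ^ n} p - root_filter 4 r N n p)) \<longlonglongrightarrow> 0"
    using r by (intro indicator_minus_root_filter_tendsto) auto
qed

lemma indicator_chain_diff_in_span_closure:
  assumes k: "odd k" "3 \<le> k" and r: "0 < r" "r\<^sup>2 < \<rho>"
  shows "(\<lambda>p. indicator {k * 2 ^ n} p - indicator {(3 * k + 1) * 2 ^ n} p)
           \<in> span_closure \<omega> (\<Union>\<mu>\<in>sphere 0 r. eigsp \<omega> \<mu>)"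
proof (rule span_closure_if_tendsto[where d = "\<lambda>N p. root_filter k r N n p - root_filter (3 * k + 1) r N n p"])
  have k': "3 \<le> 3 * k + 1"
    using k by simp
  have "3 \<le> k * 2 ^ n" "3 \<le> (3 * k + 1) * 2 ^ n"
    using k(2) k' le_mult_power2[of k n] le_mult_power2[of "3 * k + 1" n] by linarith+
  then have e: "indicator {k * 2 ^ n} \<in> wl2 \<omega>" "indicator {(3 * k + 1) * 2 ^ n} \<in> wl2 \<omega>"
    by (simp_all add: indicator_in_wl2)
  have f: "root_filter k r N n \<in> wl2 \<omega>" "root_filter (3 * k + 1) r N n \<in> wl2 \<omega>" for N
    using k k' r by (auto intro!: root_filter_in_wl2)
  show "(\<lambda>p. indicator {k * 2 ^ n} p - indicator {(3 * k + 1) * 2 ^ n} p) \<in> wl2 \<omega>"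
    using e by (rule wl2_diff)
  show "(\<lambda>p. root_filter k r N n p - root_filter (3 * k + 1) r N n p)
          \<in> cspan (\<Union>\<mu>\<in>sphere 0 r. eigsp \<omega> \<mu>) \<inter> wl2 \<omega>" for N
  proof
    have "collatz_eigvec k (of_real r * unit_root N ^ j) \<in> (\<Union>\<mu>\<in>sphere 0 r. eigsp \<omega> \<mu>)" for j
      using k r by (intro UN_I[of "of_real r * unit_root N ^ j"] collatz_eigvec_in_eigsp)
        (auto simp: norm_mult norm_power)
    then have "(\<lambda>p. \<Sum>j<N. (unit_root N ^ j) ^ (n * (N - 1)) / (of_nat N * of_real r ^ n)
                  * collatz_eigvec k (of_real r * unit_root N ^ j) p) \<in> cspan (\<Union>\<mu>\<in>sphere 0 r. eigsp \<omega> \<mu>)"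
      by (rule cspanI)
    then show "(\<lambda>p. root_filter k r N n p - root_filter (3 * k + 1) r N n p) \<in> cspan (\<Union>\<mu>\<in>sphere 0 r. eigsp \<omega> \<mu>)"
      by (simp add: root_filter_def collatz_eigvec_def right_diff_distrib sum_subtractf)
    show "(\<lambda>p. root_filter k r N n p - root_filter (3 * k + 1) r N n p) \<in> wl2 \<omega>"
      using f by (rule wl2_diff)
  qed
  have lim: "(\<lambda>N. wnorm \<omega> (\<lambda>p. indicator {k * 2 ^ n} p - root_filter k r N n p)
          + wnorm \<omega> (\<lambda>p. indicator {(3 * k + 1) * 2 ^ n} p - root_filter (3 * k + 1) r N n p)) \<longlonglongrightarrow> 0"
    using k k' r by (intro tendsto_add_zero indicator_minus_root_filter_tendsto) auto
  have nonneg: "0 \<le> wnorm \<omega> (\<lambda>p. (indicator {k * 2 ^ n} p - indicator {(3 * k + 1) * 2 ^ n} p)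
                 - (root_filter k r N n p - root_filter (3 * k + 1) r N n p))" for N
    by (intro wnorm_nonneg wl2_diff e f)
  show "(\<lambda>N. wnorm \<omega> (\<lambda>p. (indicator {k * 2 ^ n} p - indicator {(3 * k + 1) * 2 ^ n} p)
                 - (root_filter k r N n p - root_filter (3 * k + 1) r N n p))) \<longlonglongrightarrow> 0"
    by (rule tendsto_sandwich[OF always_eventually always_eventually tendsto_const lim])
      (intro allI nonneg wnorm_diff_diff_le e f)+
qed

end

section \<open>Density of the spans of eigenvectors\<close>

lemma odd_times_power2_decomp: "0 < (x::nat) \<Longrightarrow> \<exists>k n. odd k \<and> x = k * 2 ^ n"
proof (induction x rule: less_induct)
  case (less x)
  show ?case
  proof (cases "odd x")
    case True
    then show ?thesis
      by (intro exI[of _ x] exI[of _ 0]) simp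
  next
    case False
    then obtain y where y: "x = 2 * y"
      by blast
    then have "y < x" "0 < y"
      using less.prems by auto
    then obtain k n where "odd k" "y = k * 2 ^ n"
      using less.IH by blast
    then show ?thesis
      using y by (intro exI[of _ k] exI[of _ "Suc n"]) simp
  qed
qed

context growth_weight
begin

lemma indicator_linked:
  assumes r: "0 < r" "r\<^sup>2 < \<rho>" and x: "3 \<le> x"
  shows "\<exists>y>x. (\<lambda>p. indicator {x} p - indicator {y} p) \<in> span_closure \<omega> (\<Union>\<mu>\<in>sphere 0 r. eigsp \<omega> \<mu>)"
proof -
  obtain k n where kn: "odd k" "x = k * 2 ^ n"
    using odd_times_power2_decomp[of x] x by auto
  show ?thesis
  proof (cases "k = 1")
    case True
    have "2 \<le> n"
    proof (rule ccontr)
      assume "\<not> 2 \<le> n"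
      then have "n = 0 \<or> n = 1"
        by auto
      then show False
        using kn x True by auto
    qed
    define m where "m = n - 2"
    then have "n = m + 2"
      using \<open>2 \<le> n\<close> by simp
    then have x: "x = 4 * 2 ^ m" "2 * x = 4 * 2 ^ Suc m"
      using kn True by (simp_all add: power_add)
    have "(\<lambda>p. indicator {4 * 2 ^ m} p - indicator {4 * 2 ^ Suc m} p)
            \<in> span_closure \<omega> (\<Union>\<mu>\<in>sphere 0 r. eigsp \<omega> \<mu>)"
      by (rule span_closure_diff[OF indicator_4_pow2_in_span_closure[OF r] indicator_4_pow2_in_span_closure[OF r]])
    then have "(\<lambda>p. indicator {x} p - indicator {2 * x} p) \<in> span_closure \<omega> (\<Union>\<mu>\<in>sphere 0 r. eigsp \<omega> \<mu>)"
      unfolding x(2) unfolding x(1) .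
    then show ?thesis
      using x by (intro exI[of _ "2 * x"]) auto
  next
    case False
    then have "3 \<le> k"
      using kn(1) by presburger
    moreover have "x < (3 * k + 1) * 2 ^ n"
      using kn(2) by simp
    ultimately show ?thesis
      using indicator_chain_diff_in_span_closure[OF kn(1) _ r, of n] kn(2) by blast
  qed
qed

lemma dense_cspan_eigvecs_sphere:
  assumes "0 < \<delta>" "\<And>n. 3 \<le> n \<Longrightarrow> \<delta> \<le> \<omega> n" "0 < r" "r\<^sup>2 < \<rho>"
  shows "dense_in_Xw \<omega> (cspan (\<Union>\<mu>\<in>sphere 0 r. eigsp \<omega> \<mu>))"
  using assms by (intro dense_in_Xw_if_wl2_subset wl2_subset_span_closure
      indicator_in_span_closure_if_linked indicator_linked)

end

lemma godefroy_shapiro_if_growth: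
  assumes pos: "\<forall>n\<ge>1. 0 < \<omega> n" and lower: "\<exists>\<delta>>0. \<forall>n\<ge>1. \<delta> \<le> \<omega> n"
    and growth: "\<exists>\<rho>::real. \<rho> > 1 \<and> (\<forall>k\<ge>3. \<exists>B. \<forall>n. \<bar>\<rho> ^ n / \<omega> (k * 2 ^ n)\<bar> \<le> B)"
  shows "godefroy_shapiro \<omega>"
proof -
  obtain \<delta> where \<delta>: "0 < \<delta>" "\<And>n. 3 \<le> n \<Longrightarrow> \<delta> \<le> \<omega> n"
    using lower by auto
  obtain \<rho> :: real where \<rho>: "1 < \<rho>" and B: "\<forall>k\<ge>3. \<exists>B. \<forall>n. \<bar>\<rho> ^ n / \<omega> (k * 2 ^ n)\<bar> \<le> B"
    using growth by auto
  interpret growth_weight \<omega> \<rho>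
  proof
    show "3 \<le> n \<Longrightarrow> 0 < \<omega> n" for n
      using pos by simp
    show "3 \<le> k \<Longrightarrow> \<exists>B. \<forall>i. \<rho> ^ i / \<omega> (k * 2 ^ i) \<le> B" for k
      using B by (meson abs_le_D1)
  qed
  let ?r = "sqrt ((1 + \<rho>) / 2)"
  have "dense_in_Xw \<omega> (cspan (\<Union>\<mu>\<in>sphere 0 (1 / 2). eigsp \<omega> \<mu>))"
    using \<delta> \<rho> by (intro dense_cspan_eigvecs_sphere) (auto simp: power2_eq_square)
  moreover have "(\<Union>\<mu>\<in>sphere 0 (1 / 2). eigsp \<omega> \<mu>) \<subseteq> (\<Union>\<mu>\<in>{\<mu>. cmod \<mu> < 1}. eigsp \<omega> \<mu>)"
    by (rule UN_mono) auto
  moreover have "dense_in_Xw \<omega> (cspan (\<Union>\<mu>\<in>sphere 0 ?r. eigsp \<omega> \<mu>))"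
    using \<delta> \<rho> by (intro dense_cspan_eigvecs_sphere) auto
  moreover have "(\<Union>\<mu>\<in>sphere 0 ?r. eigsp \<omega> \<mu>) \<subseteq> (\<Union>\<mu>\<in>{\<mu>. cmod \<mu> > 1}. eigsp \<omega> \<mu>)"
    using \<rho> by (intro UN_mono) auto
  ultimately show ?thesis
    unfolding godefroy_shapiro_def by (blast intro: dense_in_Xw_cspan_mono)
qed

lemma godefroy_shapiro_omega0: "godefroy_shapiro omega0"
proof (rule godefroy_shapiro_if_growth)
  show "\<forall>n\<ge>1. 0 < omega0 n"
    by (simp add: omega0_def)
  show "\<exists>\<delta>>0. \<forall>n\<ge>1. \<delta> \<le> omega0 n"
    by (intro exI[of _ "1 / pi"]) (auto simp: omega0_def divide_right_mono)
  have "\<bar>2 ^ n / omega0 (k * 2 ^ n)\<bar> \<le> pi" if "3 \<le> k" for k n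
  proof -
    have "1 * (2::real) ^ n \<le> real k * 2 ^ n"
      using that by (intro mult_right_mono) auto
    then have "(2::real) ^ n \<le> real k * 2 ^ n + 1"
      by linarith
    then have le: "(2::real) ^ n / (real k * 2 ^ n + 1) \<le> 1"
      by (simp add: pos_divide_le_eq add_nonneg_pos)
    have nonneg: "0 \<le> 2 ^ n / omega0 (k * 2 ^ n)"
      by (simp add: omega0_def)
    have "\<bar>2 ^ n / omega0 (k * 2 ^ n)\<bar> = pi * (2 ^ n / (real k * 2 ^ n + 1))"
      unfolding abs_of_nonneg[OF nonneg] by (simp add: omega0_def)
    also have "\<dots> \<le> pi * 1"
      by (rule mult_left_mono[OF le]) simp
    finally show ?thesis
      by simp
  qed
  then show "\<exists>\<rho>::real. \<rho> > 1 \<and> (\<forall>k\<ge>3. \<exists>B. \<forall>n. \<bar>\<rho> ^ n / omega0 (k * 2 ^ n)\<bar> \<le> B)"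
    by (intro exI[of _ 2]) auto
qed

theorem theorem3p6:
  shows "(\<forall>\<omega>::nat \<Rightarrow> real.
            (\<forall>n\<ge>1. 0 < \<omega> n)
          \<and> (\<exists>\<delta>>0. \<forall>n\<ge>1. \<delta> \<le> \<omega> n)
          \<and> T_bounded \<omega>
          \<and> (\<exists>\<rho>::real. \<rho> > 1 \<and> (\<forall>k\<ge>3. \<exists>B. \<forall>n. \<bar>\<rho> ^ n / \<omega> (k * 2 ^ n)\<bar> \<le> B))
          \<longrightarrow> godefroy_shapiro \<omega>)
        \<and> godefroy_shapiro omega0"
  using godefroy_shapiro_if_growth godefroy_shapiro_omega0 by blast

end
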